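(* Let $d\ge2$, $q\ge2$, $n\ge1$, let $p\in\mathbb{Z}/q\mathbb{Z}$ with $\gcd(p,q)=1$ and let $p^*$ be the inverse of $p$ in $\mathbb{Z}/q\mathbb{Z}$. For $1\le i\le n$ let $\mathcal{O}_i$ be the $\sigma_d$-orbit of a point $t_i\in\mathbb{T}$ with $|\mathcal{O}_i|=q$, where the orbits $\mathcal{O}_1,\dots,\mathcal{O}_n$ are pairwise distinct and $t_1<t_2<\dots<t_n$. Write $t_i=(a^{(i)}_0,a^{(i)}_1,\dots,a^{(i)}_{q-1})$ in $q$-tuple notation. Let $A=\bigcup_{i=1}^n\mathcal{O}_i$, listed as $A=\{u_0<u_1<\dots<u_{nq-1}\}$ with indices in $\mathbb{Z}/nq\mathbb{Z}$. Then the following are equivalent: (a) each $t_i$ is the least element of $\mathcal{O}_i$, and $A$ is $\sigma_d$-rotational with $\sigma_d(u_j)=u_{j+np}$ for all $j$ (i.e. $A$ has rotation number $np/nq=p/q$); (b) the sequence of length $nq$ $$a^{(1)}_0,a^{(2)}_0,\dots,a^{(n)}_0,\ a^{(1)}_{p^*},a^{(2)}_{p^*},\dots,a^{(n)}_{p^*},\ a^{(1)}_{2p^*},\dots,a^{(n)}_{2p^*},\ \dots,\ a^{(1)}_{(q-1)p^*},\dots,a^{(n)}_{(q-1)p^*}$$ (i.e. the terms $a^{(i)}_{kp^*}$ ordered first by $k=0,1,\dots,q-1$ and then by $i=1,\dots,n$) is nondecreasing, and moreover $a^{(n)}_{-(p+1)p^*}<a^{(1)}_{-pp^*}$.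
   Context: $\mathbb{T}=\mathbb{R}/\mathbb{Z}$, totally ordered by choosing representatives in $[0,1)$; $\sigma_d(t)=dt$. A finite set $A=\{u_0<\dots<u_{N-1}\}\subset\mathbb{T}$ (indices in $\mathbb{Z}/N\mathbb{Z}$) is $\sigma_d$-rotational if for some fixed $0\ne P\in\mathbb{Z}/N\mathbb{Z}$, $\sigma_d(u_j)=u_{j+P}$ for all $j$; its rotation number is $P/N$. $q$-tuple notation: for digits $a_i\in\{0,\dots,d-1\}$, $(a_0,\dots,a_{q-1})$ denotes the point of $\mathbb{T}$ with purely periodic base-$d$ expansion $0.\overline{a_0a_1\dots a_{q-1}}$, with digit indices read in $\mathbb{Z}/q\mathbb{Z}$ (so every point of period $q$ under $\sigma_d$ has such a representation). Index expressions such as $kp^*$, $-(p+1)p^*$, $-pp^*$ are computed in $\mathbb{Z}/q\mathbb{Z}$. *)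

theory Defs
  imports Complex_Main "HOL-Number_Theory.Cong"
begin

text \<open>The circle T = R/Z is represented by representatives in [0,1), ordered as reals.\<close>

definition sigma :: "nat \<Rightarrow> real \<Rightarrow> real" where
  "sigma d t = frac (real d * t)"

definition orb :: "nat \<Rightarrow> real \<Rightarrow> real set" where
  "orb d t = range (\<lambda>k. (sigma d ^^ k) t)"

text \<open>q-tuple notation: the point with purely periodic base-d expansion 0.(a_0 ... a_{q-1}) repeated.\<close>
definition tuple_pt :: "nat \<Rightarrow> nat \<Rightarrow> (nat \<Rightarrow> nat) \<Rightarrow> real" where
  "tuple_pt d q a = (\<Sum>k<q. real (a k) * real d ^ (q - 1 - k)) / (real d ^ q - 1)"

definition rot_shift :: "nat \<Rightarrow> real set \<Rightarrow> int \<Rightarrow> bool" where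
  "rot_shift d A P \<longleftrightarrow> finite A \<and>
     (let us = sorted_list_of_set A; N = length us in
       \<forall>j<N. sigma d (us ! j) = us ! nat ((int j + P) mod int N))"

end

theory Submission
  imports Defs
begin

text \<open>
  A point of exact period \<open>q\<close> is \<open>X/D\<close> with \<open>D = d^q - 1\<close>, and \<open>\<sigma>\<^sub>d\<^sup>s(X/D) = (d^s X mod D)/D\<close>.
  The first base-\<open>d\<close> digit of this iterate is the \<open>s\<close>-th digit of \<open>X/D\<close>, so such points compare
  lexicographically by their digit sequences.

  Index the \<open>nq\<close> points of \<open>A\<close> by \<open>m = kn + (i - 1) \<mapsto> \<sigma>\<^sub>d^(kp\<^sup>*)(t\<^sub>i)\<close>. Then \<open>\<sigma>\<^sub>d\<close> adds \<open>np\<close> to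
  the index modulo \<open>nq\<close>, and the first digit of the \<open>m\<close>-th point is the \<open>m\<close>-th term of the
  sequence in (b). Both (a) and (b) are equivalent to this indexing being increasing. Under (a)
  the minima \<open>t\<^sub>i\<close> occupy the first \<open>n\<close> positions of \<open>A\<close>, and rotation fixes all other positions.
  Under (b) the points \<open>m\<close> and \<open>m + 1\<close> are compared digit by digit along the indices \<open>m + jnp\<close>;
  the first index that wraps past \<open>nq - 1\<close> is \<open>nq - np - 1\<close>, where the strict inequality of (b)
  decides. Conversely, equality there would let \<open>\<sigma>\<^sub>d\<close> reverse the order of the largest and the
  smallest point.
\<close>

locale period_expansion =
  fixes d q :: nat
  assumes base: "2 \<le> d" and period: "2 \<le> q"
begin

text \<open>
  The points of period dividing \<open>q\<close> are the \<open>pt X = X / den\<close> with \<open>X < den\<close>;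
  \<open>orbit_num X s\<close> is the numerator of \<open>\<sigma>\<^sub>d\<^sup>s(pt X)\<close> and \<open>lead_digit X\<close> the first base-\<open>d\<close>
  digit of \<open>pt X\<close>.
\<close>

definition den :: nat where "den = d ^ q - 1"

definition digits_val :: "(nat \<Rightarrow> nat) \<Rightarrow> nat" where
  "digits_val w = (\<Sum>k<q. w k * d ^ (q - 1 - k))"

definition rotate_digits :: "(nat \<Rightarrow> nat) \<Rightarrow> nat \<Rightarrow> nat \<Rightarrow> nat" where
  "rotate_digits w s = (\<lambda>k. w ((s + k) mod q))"

definition lead_digit :: "nat \<Rightarrow> nat" where "lead_digit X = d * X div den"

definition orbit_num :: "nat \<Rightarrow> nat \<Rightarrow> nat" where "orbit_num X s = d ^ s * X mod den"

definition pt :: "nat \<Rightarrow> real" where "pt X = real X / real den"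

lemma Suc_den: "den + 1 = d ^ q" and den_ge_3: "3 \<le> den"
proof -
  have "(2::nat) ^ 2 \<le> 2 ^ q" using period by (rule power_increasing) simp
  also have "\<dots> \<le> d ^ q" using base by (rule power_mono) simp
  finally show "den + 1 = d ^ q" "3 \<le> den" by (simp_all add: den_def)
qed

lemma digits_val_cong: "(\<And>k. k < q \<Longrightarrow> w k = w' k) \<Longrightarrow> digits_val w = digits_val w'"
  unfolding digits_val_def by (rule sum.cong) auto

lemma digits_val_all_max: "digits_val (\<lambda>_. d - 1) = den"
proof -
  have "int (digits_val (\<lambda>_. d - 1)) = (int d - 1) * (\<Sum>k<q. int d ^ (q - Suc k))"
    using base by (simp add: digits_val_def sum_distrib_left of_nat_diff)
  also have "\<dots> = int d ^ q - 1"
    by (simp add: sum.nat_diff_reindex power_diff_1_eq)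
  finally show ?thesis using arg_cong[OF Suc_den, of int] by simp
qed

lemma digits_val_le_den:
  assumes "\<And>k. k < q \<Longrightarrow> w k < d"
  shows "digits_val w \<le> den"
proof -
  have "w k \<le> d - 1" if "k < q" for k using assms[OF that] by linarith
  then have "digits_val w \<le> digits_val (\<lambda>_. d - 1)"
    unfolding digits_val_def by (intro sum_mono mult_le_mono1) simp
  then show ?thesis using digits_val_all_max by simp
qed

lemma max_digit_if_digits_val_eq_den:
  assumes digits: "\<And>k. k < q \<Longrightarrow> w k < d" and "digits_val w = den" and "k < q"
  shows "w k = d - 1"
proof (rule ccontr)
  assume "w k \<noteq> d - 1"
  then have "w k < d - 1" using digits[OF \<open>k < q\<close>] by simp
  moreover have "w j \<le> d - 1" if "j < q" for j using digits[OF that] by linarith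
  ultimately have "digits_val w < digits_val (\<lambda>_. d - 1)"
    unfolding digits_val_def using \<open>k < q\<close> base
    by (intro sum_strict_mono_ex1) (auto intro!: mult_le_mono1 bexI[of _ k])
  then show False using assms(2) digits_val_all_max by simp
qed

lemma digits_val_rotate:
  "d * digits_val w = w 0 * den + digits_val (rotate_digits w 1)"
proof -
  obtain r where qr: "q = Suc r" using period by (cases q) auto
  define S where "S = (\<Sum>k<r. w (Suc k) * d ^ (r - Suc k))"
  have "digits_val (rotate_digits w 1) = (\<Sum>k<r. w (Suc k) * d ^ (r - k)) + w 0"
    unfolding digits_val_def rotate_digits_def by (simp add: qr sum.lessThan_Suc)
  also have "(\<Sum>k<r. w (Suc k) * d ^ (r - k)) = d * S"
    unfolding S_def sum_distrib_left
  proof (intro sum.cong refl)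
    fix k assume "k \<in> {..<r}"
    then have "r - k = Suc (r - Suc k)" by auto
    then show "w (Suc k) * d ^ (r - k) = d * (w (Suc k) * d ^ (r - Suc k))" by simp
  qed
  finally have rot: "digits_val (rotate_digits w 1) = d * S + w 0" .
  have "digits_val w = w 0 * d ^ r + S"
    unfolding digits_val_def S_def by (simp only: qr sum.lessThan_Suc_shift) simp
  then have "d * digits_val w = w 0 * d ^ q + d * S" by (simp add: qr algebra_simps)
  also have "\<dots> = w 0 * den + w 0 + d * S" by (simp add: Suc_den[symmetric] algebra_simps)
  finally show ?thesis using rot by simp
qed

lemma rotate_digits_Suc: "rotate_digits (rotate_digits w s) 1 = rotate_digits w (Suc s)"
  by (simp add: rotate_digits_def mod_add_right_eq)

lemma orbit_num_less: "orbit_num X s < den"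
  using den_ge_3 by (simp add: orbit_num_def)

lemma orbit_num_0: "X < den \<Longrightarrow> orbit_num X 0 = X"
  by (simp add: orbit_num_def)

lemma orbit_num_Suc: "orbit_num X (Suc s) = d * orbit_num X s mod den"
  by (simp add: orbit_num_def mod_mult_right_eq mult.assoc)

lemma rotate_digits_digits:
  "(\<And>k. k < q \<Longrightarrow> w k < d) \<Longrightarrow> k < q \<Longrightarrow> rotate_digits w s k < d"
  using period by (simp add: rotate_digits_def)

lemma digits_val_rotate_less:
  assumes digits: "\<And>k. k < q \<Longrightarrow> w k < d" and "digits_val w < den"
  shows "digits_val (rotate_digits w 1) < den"
proof (rule ccontr)
  assume "\<not> ?thesis"
  then have max: "digits_val (rotate_digits w 1) = den"
    using digits_val_le_den[OF rotate_digits_digits[OF digits]] by (simp add: le_antisym)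
  have "w k = d - 1" if "k < q" for k
  proof -
    have "(1 + (k + q - 1) mod q) mod q = k"
      using that period by (simp add: mod_Suc_eq)
    then have "w k = rotate_digits w 1 ((k + q - 1) mod q)" by (simp add: rotate_digits_def)
    also have "\<dots> = d - 1"
      using period by (intro max_digit_if_digits_val_eq_den[OF rotate_digits_digits[OF digits] max]) simp_all
    finally show ?thesis .
  qed
  then have "digits_val w = digits_val (\<lambda>_. d - 1)" by (rule digits_val_cong)
  then show False using assms(2) digits_val_all_max by simp
qed

lemma digits_val_rotate_mod:
  assumes "\<And>k. k < q \<Longrightarrow> w k < d" and "digits_val w < den"
  shows "d * digits_val w mod den = digits_val (rotate_digits w 1)"
    and "d * digits_val w div den = w 0"
  using digits_val_rotate[of w] digits_val_rotate_less[OF assms] by simp_all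

lemma orbit_num_digits_val:
  assumes digits: "\<And>k. k < q \<Longrightarrow> w k < d" and "digits_val w < den"
  shows "orbit_num (digits_val w) s = digits_val (rotate_digits w s)"
proof (induction s)
  case 0
  have "digits_val (rotate_digits w 0) = digits_val w"
    by (rule digits_val_cong) (simp add: rotate_digits_def)
  then show ?case using assms(2) by (simp add: orbit_num_0)
next
  case (Suc s)
  have "digits_val (rotate_digits w s) < den"
    using Suc.IH orbit_num_less[of "digits_val w" s] by simp
  note rotate = digits_val_rotate_mod(1)[OF rotate_digits_digits[OF digits] this]
  have "orbit_num (digits_val w) (Suc s) = d * digits_val (rotate_digits w s) mod den"
    by (simp only: orbit_num_Suc Suc.IH)
  also have "\<dots> = digits_val (rotate_digits w (Suc s))"
    by (simp only: rotate rotate_digits_Suc)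
  finally show ?case .
qed

lemma lead_digit_orbit_num:
  assumes digits: "\<And>k. k < q \<Longrightarrow> w k < d" and "digits_val w < den"
  shows "lead_digit (orbit_num (digits_val w) s) = w (s mod q)"
proof -
  have orb: "orbit_num (digits_val w) s = digits_val (rotate_digits w s)"
    by (rule orbit_num_digits_val[OF assms])
  then have less: "digits_val (rotate_digits w s) < den" using orbit_num_less by metis
  have "lead_digit (orbit_num (digits_val w) s) = rotate_digits w s 0"
    unfolding lead_digit_def orb by (rule digits_val_rotate_mod(2)[OF rotate_digits_digits[OF digits] less])
  then show ?thesis by (simp add: rotate_digits_def)
qed

lemma orbit_num_orbit_num: "orbit_num (orbit_num X s) k = orbit_num X (s + k)"
  by (simp add: orbit_num_def mod_mult_right_eq power_add ac_simps)

lemma orbit_num_add_period: "orbit_num X (s + q) = orbit_num X s"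
proof -
  have "d ^ q mod den = 1" unfolding Suc_den[symmetric] using den_ge_3 by (simp add: mod_Suc)
  moreover have "orbit_num X (s + q) = (d ^ q mod den) * (d ^ s * X) mod den"
    unfolding orbit_num_def power_add mod_mult_left_eq by (simp add: ac_simps)
  ultimately show ?thesis by (simp add: orbit_num_def)
qed

lemma orbit_num_mod_period: "orbit_num X s = orbit_num X (s mod q)"
proof -
  have "orbit_num X (s mod q + q * j) = orbit_num X (s mod q)" for j
  proof (induction j)
    case (Suc j)
    have "s mod q + q * Suc j = (s mod q + q * j) + q" by simp
    then show ?case using Suc orbit_num_add_period by metis
  qed simp
  from this[of "s div q"] show ?thesis by simp
qed

lemma range_orbit_num: "range (orbit_num X) = orbit_num X ` {..<q}"
  using period by (auto simp: image_iff intro: orbit_num_mod_period exI[of _ "_ mod q"])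

lemma range_orbit_num_subset:
  assumes "orbit_num X s = orbit_num Y s'"
  shows "range (orbit_num X) \<subseteq> range (orbit_num Y)"
proof (rule image_subsetI)
  fix x
  have "s \<le> q * s" using period by simp
  then have "s + (x + q * s - s) = x + q * s" by linarith
  then have "orbit_num X x = orbit_num X (s + (x + q * s - s))"
    by (metis orbit_num_mod_period mod_mult_self2)
  also have "\<dots> = orbit_num Y (s' + (x + q * s - s))"
    by (simp add: orbit_num_orbit_num[symmetric] assms)
  finally show "orbit_num X x \<in> range (orbit_num Y)" by simp
qed

lemma pt_less_iff [simp]: "pt X < pt Y \<longleftrightarrow> X < Y"
  and pt_eq_iff [simp]: "pt X = pt Y \<longleftrightarrow> X = Y"
  using den_ge_3 by (simp_all add: pt_def divide_less_cancel divide_le_cancel)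

lemma sigma_pt: "sigma d (pt X) = pt (orbit_num X 1)"
proof -
  have "real d * pt X = real (d * X div den) + pt (orbit_num X 1)"
    using den_ge_3 by (simp add: pt_def orbit_num_def field_simps flip: of_nat_mult of_nat_add)
  moreover have "0 \<le> pt (orbit_num X 1)" "pt (orbit_num X 1) < 1"
    using orbit_num_less[of X 1] by (simp_all add: pt_def)
  ultimately show ?thesis unfolding sigma_def by (simp add: frac_unique_iff)
qed

lemma funpow_sigma_pt: "X < den \<Longrightarrow> (sigma d ^^ s) (pt X) = pt (orbit_num X s)"
  by (induction s) (simp_all add: orbit_num_0 sigma_pt orbit_num_orbit_num)

lemma orb_pt: "X < den \<Longrightarrow> orb d (pt X) = pt ` range (orbit_num X)"
  by (auto simp: orb_def funpow_sigma_pt)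

lemma pt_less_1_iff: "pt X < 1 \<longleftrightarrow> X < den"
  using den_ge_3 by (simp add: pt_def)

lemma tuple_pt_eq_pt: "tuple_pt d q w = pt (digits_val w)"
proof -
  have "real den = real d ^ q - 1" using arg_cong[OF Suc_den, of real] by simp
  then show ?thesis by (simp add: tuple_pt_def pt_def digits_val_def)
qed

lemma inj_on_orbit_num_if_card_orb:
  assumes "X < den" and "card (orb d (pt X)) = q"
  shows "inj_on (orbit_num X) {..<q}"
proof -
  have "card ((pt \<circ> orbit_num X) ` {..<q}) = card {..<q}"
    using assms by (simp add: orb_pt range_orbit_num image_comp)
  then have "inj_on (pt \<circ> orbit_num X) {..<q}" by (rule eq_card_imp_inj_on[OF finite_lessThan])
  then show ?thesis by (simp add: inj_on_def)
qed

lemma orbit_num_neq_if_orb_neq: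
  assumes "X < den" "Y < den" and "orb d (pt X) \<noteq> orb d (pt Y)"
  shows "orbit_num X s \<noteq> orbit_num Y s'"
proof
  assume "orbit_num X s = orbit_num Y s'"
  then have "range (orbit_num X) = range (orbit_num Y)"
    using range_orbit_num_subset by (metis subset_antisym)
  then show False using assms by (simp add: orb_pt)
qed

lemma lead_digit_mono: "X \<le> Y \<Longrightarrow> lead_digit X \<le> lead_digit Y"
  unfolding lead_digit_def by (simp add: div_le_mono)

lemma orbit_num_Suc_less_if_lead_digit_eq:
  assumes "lead_digit (orbit_num X s) = lead_digit (orbit_num Y s)" and "orbit_num X s < orbit_num Y s"
  shows "orbit_num X (Suc s) < orbit_num Y (Suc s)"
    and "orbit_num Y (Suc s) - orbit_num X (Suc s) = d * (orbit_num Y s - orbit_num X s)"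
proof -
  have "d * orbit_num X s = den * lead_digit (orbit_num X s) + orbit_num X (Suc s)"
    and "d * orbit_num Y s = den * lead_digit (orbit_num Y s) + orbit_num Y (Suc s)"
    by (simp_all add: lead_digit_def orbit_num_Suc)
  moreover have "d * orbit_num X s < d * orbit_num Y s" using assms(2) base by simp
  ultimately show "orbit_num X (Suc s) < orbit_num Y (Suc s)"
    and "orbit_num Y (Suc s) - orbit_num X (Suc s) = d * (orbit_num Y s - orbit_num X s)"
    using assms(1) by (simp_all add: diff_mult_distrib2)
qed

lemma orbit_num_less_while_lead_digits_eq:
  assumes "X < Y" "Y < den" and "\<forall>j<k. lead_digit (orbit_num X j) = lead_digit (orbit_num Y j)"
  shows "orbit_num X k < orbit_num Y k \<and> orbit_num Y k - orbit_num X k = d ^ k * (Y - X)"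
  using assms(3)
proof (induction k)
  case 0
  show ?case using assms(1,2) by (simp add: orbit_num_0)
next
  case (Suc k)
  then show ?case using orbit_num_Suc_less_if_lead_digit_eq[of X k Y] by simp
qed

lemma lead_digits_le_imp_eq:
  assumes "Y < X" "X < den" and "\<forall>j\<le>J. lead_digit (orbit_num X j) \<le> lead_digit (orbit_num Y j)"
  shows "\<forall>j\<le>J. lead_digit (orbit_num X j) = lead_digit (orbit_num Y j)"
  using assms(3)
proof (induction J)
  case 0
  then show ?case using lead_digit_mono[of Y X] assms(1,2) by (simp add: orbit_num_0)
next
  case (Suc J)
  then have "\<forall>j<Suc J. lead_digit (orbit_num Y j) = lead_digit (orbit_num X j)" by auto
  then have "orbit_num Y (Suc J) < orbit_num X (Suc J)"
    using orbit_num_less_while_lead_digits_eq assms(1,2) by blast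
  then have "lead_digit (orbit_num Y (Suc J)) \<le> lead_digit (orbit_num X (Suc J))"
    by (simp add: lead_digit_mono)
  then have "lead_digit (orbit_num X (Suc J)) = lead_digit (orbit_num Y (Suc J))"
    using Suc.prems by (simp add: antisym)
  then show ?case using \<open>\<forall>j<Suc J. _\<close> by (auto simp: le_less)
qed

lemma less_if_lead_digits_lex:
  assumes "X < den" "Y < den"
    and "\<forall>j\<le>J. lead_digit (orbit_num X j) \<le> lead_digit (orbit_num Y j)"
    and "lead_digit (orbit_num X J) < lead_digit (orbit_num Y J)"
  shows "X < Y"
proof (rule ccontr)
  assume "\<not> X < Y"
  moreover have "X \<noteq> Y" using assms(4) by auto
  ultimately show False using lead_digits_le_imp_eq[of Y X J] assms by simp
qed

lemma less_if_lead_digits_le: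
  assumes "X < den" "Y < den" "X \<noteq> Y"
    and "\<forall>j<q. lead_digit (orbit_num X j) \<le> lead_digit (orbit_num Y j)"
  shows "X < Y"
proof (rule ccontr)
  assume "\<not> X < Y"
  then have "Y < X" using assms(3) by simp
  moreover have "\<forall>j<q. lead_digit (orbit_num Y j) = lead_digit (orbit_num X j)"
    using lead_digits_le_imp_eq[OF \<open>Y < X\<close> assms(1), of "q - 1"] assms(4) period by auto
  ultimately have "orbit_num X q - orbit_num Y q = d ^ q * (X - Y)"
    using orbit_num_less_while_lead_digits_eq assms(1) by blast
  moreover have "d ^ q * 1 \<le> d ^ q * (X - Y)" using \<open>Y < X\<close> by (intro mult_le_mono2) simp
  ultimately show False using orbit_num_less[of X q] Suc_den by linarith
qed

end

lemma rot_shift_iff: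
  assumes "finite A"
  shows "rot_shift d A P \<longleftrightarrow> (\<forall>j<card A. sigma d (sorted_list_of_set A ! j)
           = sorted_list_of_set A ! ((j + nat (P mod int (card A))) mod card A))"
proof -
  have "nat ((int j + P) mod int (card A)) = (j + nat (P mod int (card A))) mod card A"
    if "j < card A" for j
  proof -
    have "(int j + P) mod int (card A) = (int j + P mod int (card A)) mod int (card A)"
      by (simp add: mod_add_right_eq)
    also have "\<dots> = int ((j + nat (P mod int (card A))) mod card A)"
      using that by (simp add: of_nat_mod)
    finally show ?thesis by simp
  qed
  then show ?thesis using assms by (simp add: rot_shift_def Let_def)
qed

lemma funpow_sigma_sorted_nth:
  assumes "rot_shift d A P" and "j < card A"
  shows "(sigma d ^^ k) (sorted_list_of_set A ! j)
           = sorted_list_of_set A ! ((j + k * nat (P mod int (card A))) mod card A)"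
proof (induction k)
  case 0
  show ?case using assms(2) by simp
next
  case (Suc k)
  define s where "s = nat (P mod int (card A))"
  have "finite A" using assms(1) by (simp add: rot_shift_def)
  then have "sigma d (sorted_list_of_set A ! ((j + k * s) mod card A))
      = sorted_list_of_set A ! (((j + k * s) mod card A + s) mod card A)"
    using assms rot_shift_iff[of A d P] by (simp add: s_def)
  also have "((j + k * s) mod card A + s) mod card A = (j + Suc k * s) mod card A"
    by (metis mod_add_left_eq add.assoc mult_Suc add.commute)
  finally show ?case using Suc by (simp add: s_def)
qed

lemma strict_mono_on_bounded_eq_pred:
  fixes f :: "nat \<Rightarrow> nat"
  assumes mono: "strict_mono_on {1..n} f" and bound: "\<forall>i\<in>{1..n}. f i < n" and i: "i \<in> {1..n}"
  shows "f i = i - 1"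
proof -
  have inj: "inj_on f {1..n}" using mono by (rule strict_mono_on_imp_inj_on)
  have "i - 1 = card (f ` {1..<i})"
    using inj_on_subset[OF inj] i by (simp add: card_image subset_iff)
  also have "\<dots> \<le> card {..<f i}"
    using i by (intro card_mono) (auto intro!: strict_mono_onD[OF mono])
  finally have lower: "i - 1 \<le> f i" by simp
  have "n - i = card (f ` {i<..n})"
    using inj_on_subset[OF inj] i by (simp add: card_image subset_iff)
  also have "\<dots> \<le> card {f i<..<n}"
    using i bound by (intro card_mono) (auto intro!: strict_mono_onD[OF mono])
  finally have "n - i \<le> n - Suc (f i)" by simp
  moreover have "f i < n" using bound i by blast
  ultimately show ?thesis using lower i by simp
qed

locale orbit_family = period_expansion +
  fixes n :: nat and p ps :: int and a :: "nat \<Rightarrow> nat \<Rightarrow> nat"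
  assumes n_pos: "1 \<le> n"
    and coprime: "coprime p (int q)" and inverse: "[p * ps = 1] (mod int q)"
    and digits: "\<And>i k. i \<in> {1..n} \<Longrightarrow> k < q \<Longrightarrow> a i k < d"
    and below_den: "\<And>i. i \<in> {1..n} \<Longrightarrow> digits_val (a i) < den"
    and inj_orbit: "\<And>i. i \<in> {1..n} \<Longrightarrow> inj_on (orbit_num (digits_val (a i))) {..<q}"
    and distinct_orbits: "\<And>i j s s'. i \<in> {1..n} \<Longrightarrow> j \<in> {1..n} \<Longrightarrow> i \<noteq> j \<Longrightarrow>
           orbit_num (digits_val (a i)) s \<noteq> orbit_num (digits_val (a j)) s'"
begin

text \<open>
  \<open>pn\<close> and \<open>psn\<close> are the representatives of \<open>p\<close> and \<open>p\<^sup>*\<close> in \<open>[0, q)\<close>. For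
  \<open>m = kn + (i - 1)\<close>, \<open>U m\<close> is the numerator of \<open>\<sigma>\<^sub>d^(kp\<^sup>*)(t\<^sub>i)\<close>, the point the theorem
  predicts at position \<open>m\<close> of \<open>A\<close>, and \<open>digit m\<close> is its first digit.
\<close>

definition N :: nat where "N = n * q"

definition pn :: nat where "pn = nat (p mod int q)"
definition psn :: nat where "psn = nat (ps mod int q)"

definition idx :: "nat \<Rightarrow> nat" where "idx m = m mod n + 1"
definition itr :: "nat \<Rightarrow> nat" where "itr m = nat ((int (m div n) * ps) mod int q)"

definition U :: "nat \<Rightarrow> nat" where "U m = orbit_num (digits_val (a (idx m))) (itr m)"
definition digit :: "nat \<Rightarrow> nat" where "digit m = a (idx m) (itr m)"

definition T :: "nat \<Rightarrow> real" where "T i = pt (digits_val (a i))"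
definition orbit_union :: "real set" where "orbit_union = (\<Union>i\<in>{1..n}. orb d (T i))"

lemma N_ge: "2 \<le> N" "n \<le> N"
  using n_pos period mult_le_mono[of 1 n 2 q] mult_le_mono2[of 1 q n] by (simp_all add: N_def)

lemma pn_less: "pn < q" and pn_pos: "0 < pn"
proof -
  have "int pn = p mod int q" "p mod int q < int q" using period by (simp_all add: pn_def)
  moreover have "\<not> int q dvd p" using coprime period by auto
  ultimately show "pn < q" "0 < pn" by (auto simp: dvd_eq_mod_eq_0)
qed

lemma mult_pn_psn_mod: "j * pn * psn mod q = j mod q"
proof -
  have "int (j * pn * psn) = int j * (p mod int q) * (ps mod int q)"
    using period by (simp add: pn_def psn_def)
  also have "[\<dots> = int j * p * ps] (mod int q)"
    by (intro cong_mult cong_refl) (simp_all add: cong_def)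
  also have "int j * p * ps = int j * (p * ps)" by (simp add: mult.assoc)
  also have "[int j * (p * ps) = int j * 1] (mod int q)" by (intro cong_mult cong_refl inverse)
  finally have "[j * pn * psn = j] (mod q)" by (simp only: mult_1_right cong_int_iff)
  then show ?thesis by (simp add: cong_def)
qed

lemma itr_eq: "itr m = m div n * psn mod q"
proof -
  have "int (m div n * psn mod q) = int (m div n) * (ps mod int q) mod int q"
    using period by (simp add: psn_def of_nat_mod)
  then show ?thesis by (simp add: itr_def mod_mult_right_eq)
qed

lemma idx_range: "idx m \<in> {1..n}"
  using n_pos by (simp add: idx_def Suc_le_eq)

lemma itr_less: "itr m < q"
  using period by (simp add: itr_eq)

lemma rotate_index: "(x + j * (n * pn)) mod N = n * ((x div n + j * pn) mod q) + x mod n"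
proof -
  have eq: "x + j * (n * pn) = x + n * (j * pn)" by (simp add: ac_simps)
  have "(x + j * (n * pn)) div n = x div n + j * pn" unfolding eq using n_pos by simp
  moreover have "(x + j * (n * pn)) mod n = x mod n" unfolding eq by simp
  ultimately show ?thesis unfolding N_def using mod_mult2_eq[of "x + j * (n * pn)" n q] by simp
qed

lemma idx_rotate: "idx ((x + j * (n * pn)) mod N) = idx x"
  unfolding rotate_index idx_def using n_pos by simp

lemma itr_rotate: "itr ((x + j * (n * pn)) mod N) = (itr x + j) mod q"
proof -
  have "itr ((x + j * (n * pn)) mod N) = (x div n + j * pn) mod q * psn mod q"
    unfolding itr_eq rotate_index using n_pos by simp
  also have "\<dots> = (x div n * psn mod q + j * pn * psn mod q) mod q"
    by (simp only: mod_mult_left_eq distrib_right mod_add_eq)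
  also have "\<dots> = (itr x + j) mod q"
    by (simp add: itr_eq mult_pn_psn_mod mod_add_left_eq mod_add_right_eq)
  finally show ?thesis .
qed

lemma orbit_num_U: "orbit_num (U m) j = U ((m + j * (n * pn)) mod N)"
proof -
  have "orbit_num (U m) j = orbit_num (digits_val (a (idx m))) ((itr m + j) mod q)"
    unfolding U_def orbit_num_orbit_num by (rule orbit_num_mod_period)
  then show ?thesis by (simp add: U_def idx_rotate itr_rotate)
qed

lemma lead_digit_U: "lead_digit (U m) = digit m"
  unfolding U_def digit_def
  using lead_digit_orbit_num[OF digits[OF idx_range] below_den[OF idx_range]] itr_less by simp

lemma U_less: "U m < den"
  by (simp add: U_def orbit_num_less)

lemma div_eq_itr: assumes "m < N" shows "m div n = itr m * pn mod q"
proof -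
  have "m div n < q" using assms n_pos by (simp add: N_def less_mult_imp_div_less mult.commute)
  moreover have "itr m * pn mod q = m div n * pn * psn mod q"
    unfolding itr_eq mod_mult_left_eq by (simp add: ac_simps)
  ultimately show ?thesis by (simp add: mult_pn_psn_mod)
qed

lemma U_inj: assumes "m < N" "m' < N" "U m = U m'" shows "m = m'"
proof -
  have "idx m = idx m'" using distinct_orbits[OF idx_range idx_range] assms(3) unfolding U_def by blast
  then have "itr m = itr m'"
    using inj_orbit[OF idx_range[of m]] assms(3) itr_less[of m] itr_less[of m']
    unfolding U_def inj_on_def by auto
  then have "m div n = m' div n" using div_eq_itr assms(1,2) by simp
  moreover have "m mod n = m' mod n" using \<open>idx m = idx m'\<close> by (simp add: idx_def)
  ultimately show ?thesis by (metis div_mult_mod_eq)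
qed

lemma U_cover:
  assumes "i \<in> {1..n}"
  obtains y where "i - 1 + n * y < N" and "U (i - 1 + n * y) = orbit_num (digits_val (a i)) s"
proof -
  define y where "y = s mod q * pn mod q"
  have "y < q" using period by (simp add: y_def)
  then have "n * (y + 1) \<le> N" unfolding N_def by (intro mult_le_mono2) simp
  moreover have "i - 1 + n * y < n * (y + 1)" using assms by auto
  ultimately have "i - 1 + n * y < N" by linarith
  moreover have "idx (i - 1 + n * y) = i" using assms by (cases i) (simp_all add: idx_def)
  moreover have "itr (i - 1 + n * y) = s mod q"
  proof -
    have "(i - 1 + n * y) div n = y" using assms by (cases i) simp_all
    then have "itr (i - 1 + n * y) = y * psn mod q" by (simp add: itr_eq)
    also have "\<dots> = s mod q * pn * psn mod q" unfolding y_def by (metis mod_mult_left_eq mult.assoc)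
    finally show ?thesis by (simp add: mult_pn_psn_mod)
  qed
  ultimately show ?thesis
    using that[of y] orbit_num_mod_period[of "digits_val (a i)" s] by (simp add: U_def)
qed

lemma orbit_union_eq: "orbit_union = (pt \<circ> U) ` {..<N}"
proof
  show "orbit_union \<subseteq> (pt \<circ> U) ` {..<N}"
  proof
    fix x assume "x \<in> orbit_union"
    then obtain i s where i: "i \<in> {1..n}" and x: "x = pt (orbit_num (digits_val (a i)) s)"
      using below_den by (auto simp: orbit_union_def T_def orb_pt)
    obtain y where "i - 1 + n * y < N" "U (i - 1 + n * y) = orbit_num (digits_val (a i)) s"
      using U_cover[OF i] .
    then show "x \<in> (pt \<circ> U) ` {..<N}" using x by (metis comp_apply imageI lessThan_iff)
  qed
  show "(pt \<circ> U) ` {..<N} \<subseteq> orbit_union"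
  proof
    fix x assume "x \<in> (pt \<circ> U) ` {..<N}"
    then obtain m where "x = pt (U m)" by auto
    then have "x \<in> orb d (T (idx m))"
      using below_den[OF idx_range] by (simp add: T_def orb_pt U_def)
    then show "x \<in> orbit_union" using idx_range unfolding orbit_union_def by blast
  qed
qed

lemma card_orbit_union: "card orbit_union = N"
  unfolding orbit_union_eq by (subst card_image) (auto simp: inj_on_def intro: U_inj)

lemma U_initial: "i \<in> {1..n} \<Longrightarrow> U (i - 1) = digits_val (a i)"
  using below_den by (cases i) (simp_all add: U_def idx_def itr_def orbit_num_0)

definition u :: "nat \<Rightarrow> real" where "u j = sorted_list_of_set orbit_union ! j"

definition U_increasing :: bool where "U_increasing \<longleftrightarrow> (\<forall>m. Suc m < N \<longrightarrow> U m < U (Suc m))"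

lemma finite_orbit_union: "finite orbit_union"
  by (simp add: orbit_union_eq)

lemma u_strict_mono: "i < j \<Longrightarrow> j < N \<Longrightarrow> u i < u j"
  using sorted_wrt_nth_less[OF strict_sorted_list_of_set[of orbit_union]] card_orbit_union
  by (simp add: u_def)

lemma U_increasing_imp_sorted:
  assumes U_increasing
  shows "sorted_list_of_set orbit_union = map (pt \<circ> U) [0..<N]"
proof (rule strict_sorted_equal)
  show "sorted_wrt (<) (map (pt \<circ> U) [0..<N])"
    using assms by (simp add: U_increasing_def sorted_wrt_iff_nth_Suc_transp)
qed (auto simp: finite_orbit_union orbit_union_eq)

lemma u_eq_pt_U: "U_increasing \<Longrightarrow> m < N \<Longrightarrow> u m = pt (U m)"
  by (simp add: u_def U_increasing_imp_sorted)

lemma np_mod_N: "nat (int n * p mod int N) = n * pn"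
proof -
  have "int n * p mod int N = int n * (p mod int q)" by (simp add: N_def mod_mult_mult1)
  then show ?thesis using period by (simp add: pn_def nat_mult_distrib)
qed

lemma rot_shift_if_U_increasing:
  assumes U_increasing
  shows "rot_shift d orbit_union (int n * p)"
proof -
  have "sigma d (u j) = u ((j + n * pn) mod N)" if "j < N" for j
  proof -
    have "sigma d (u j) = pt (orbit_num (U j) 1)" using that by (simp add: u_eq_pt_U[OF assms] sigma_pt)
    also have "\<dots> = u ((j + n * pn) mod N)" using N_ge by (simp add: orbit_num_U u_eq_pt_U[OF assms])
    finally show ?thesis .
  qed
  then show ?thesis
    unfolding rot_shift_iff[OF finite_orbit_union] card_orbit_union np_mod_N by (simp add: u_def)
qed

lemma T_min_if_U_increasing:
  assumes U_increasing and i: "i \<in> {1..n}" and "x \<in> orb d (T i)"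
  shows "T i \<le> x"
proof -
  obtain s where x: "x = pt (orbit_num (digits_val (a i)) s)"
    using assms(3) below_den[OF i] by (auto simp: T_def orb_pt)
  obtain y where y: "i - 1 + n * y < N" "U (i - 1 + n * y) = orbit_num (digits_val (a i)) s"
    using U_cover[OF i] .
  have "T i = u (i - 1)" using U_initial[OF i] u_eq_pt_U[OF assms(1)] y(1) by (simp add: T_def)
  also have "\<dots> \<le> u (i - 1 + n * y)"
    using u_strict_mono[of "i - 1" "i - 1 + n * y"] y(1) n_pos by (cases "y = 0") simp_all
  also have "\<dots> = x" by (simp only: u_eq_pt_U[OF assms(1) y(1)] y(2) x)
  finally show ?thesis .
qed

lemma rotate_index_back:
  assumes "n \<le> j" "j < N"
  shows "(j + (q - 1) * psn * (n * pn)) mod N = j - n"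
proof -
  have "1 \<le> j div n" using assms(1) n_pos by (simp add: Suc_le_eq div_greater_zero_iff)
  have "j div n < q" using assms(2) n_pos by (simp add: N_def less_mult_imp_div_less mult.commute)
  have "(j div n + (q - 1) * psn * pn) mod q = (j div n + (q - 1)) mod q"
    using mult_pn_psn_mod[of "q - 1"] by (metis mod_add_right_eq mult.assoc mult.commute)
  also have "j div n + (q - 1) = (j div n - 1) + q" using \<open>1 \<le> j div n\<close> period by linarith
  also have "((j div n - 1) + q) mod q = j div n - 1" using \<open>j div n < q\<close> by simp
  finally have "(j div n + (q - 1) * psn * pn) mod q = j div n - 1" .
  then have "(j + (q - 1) * psn * (n * pn)) mod N = n * (j div n - 1) + j mod n"
    by (simp add: rotate_index)
  also have "\<dots> = j - n"
  proof -
    have "n * (j div n - 1) = n * (j div n) - n" by (simp add: diff_mult_distrib2)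
    moreover have "n \<le> n * (j div n)" using \<open>1 \<le> j div n\<close> by simp
    ultimately show ?thesis using mult_div_mod_eq[of n j] by linarith
  qed
  finally show ?thesis .
qed

context
  assumes T_min: "\<forall>i\<in>{1..n}. \<forall>x\<in>orb d (T i). T i \<le> x"
    and rotational: "rot_shift d orbit_union (int n * p)"
    and T_mono: "\<forall>i\<in>{1..n}. \<forall>j\<in>{1..n}. i < j \<longrightarrow> T i < T j"
begin

lemma funpow_sigma_u: "j < N \<Longrightarrow> (sigma d ^^ k) (u j) = u ((j + k * (n * pn)) mod N)"
  using funpow_sigma_sorted_nth[OF rotational] by (simp add: u_def card_orbit_union np_mod_N)

lemma position_of_T:
  assumes i: "i \<in> {1..n}"
  obtains j where "j < n" and "u j = T i"
proof -
  have "T i \<in> orbit_union"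
    using i unfolding orbit_union_def orb_def by (auto intro!: range_eqI[of _ _ 0])
  then obtain j where j: "j < N" "u j = T i"
    using card_orbit_union finite_orbit_union by (metis in_set_conv_nth set_sorted_list_of_set
        length_sorted_list_of_set u_def)
  have "j < n"
  proof (rule ccontr)
    assume "\<not> j < n"
    \<comment> \<open>then \<open>\<sigma>\<^sub>d^((q-1)p\<^sup>*)\<close> moves \<open>T i\<close> to position \<open>j - n\<close>, below the minimum of its orbit\<close>
    define k where "k = (q - 1) * psn"
    have "T i \<le> (sigma d ^^ k) (T i)" using T_min i by (simp add: orb_def)
    also have "\<dots> = u (j - n)"
      using funpow_sigma_u[OF j(1)] rotate_index_back[of j] j \<open>\<not> j < n\<close> by (simp add: k_def)
    also have "\<dots> < u j" using u_strict_mono j(1) \<open>\<not> j < n\<close> n_pos by simp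
    finally show False using j(2) by simp
  qed
  then show ?thesis using that j(2) by blast
qed

lemma u_T: assumes "i \<in> {1..n}" shows "u (i - 1) = T i"
proof -
  define r where "r i = (SOME j. j < n \<and> u j = T i)" for i
  have r: "r i < n \<and> u (r i) = T i" if "i \<in> {1..n}" for i
    unfolding r_def by (rule someI_ex, rule position_of_T[OF that]) blast
  have u_order: "j < j'" if "u j < u j'" "j < N" "j' < N" for j j'
    using that u_strict_mono[of j' j] by (cases j j' rule: linorder_cases) auto
  have "strict_mono_on {1..n} r"
  proof (rule strict_mono_onI)
    fix i j assume "i \<in> {1..n}" "j \<in> {1..n}" "i < j"
    then have "u (r i) < u (r j)" using r T_mono by simp
    moreover have "r i < N" "r j < N" using r \<open>i \<in> {1..n}\<close> \<open>j \<in> {1..n}\<close> N_ge(2) by fastforce+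
    ultimately show "r i < r j" by (rule u_order)
  qed
  then have "r i = i - 1" using strict_mono_on_bounded_eq_pred r assms by blast
  then show ?thesis using r[OF assms] by simp
qed

lemma u_eq_pt_U_if_rotational: assumes "m < N" shows "u m = pt (U m)"
proof -
  define k where "k = m div n * psn"
  have "m div n * psn * pn mod q = m div n"
    using div_eq_itr[OF assms] unfolding itr_eq mod_mult_left_eq by (simp add: ac_simps)
  then have "(m mod n + k * (n * pn)) mod N = m"
    unfolding rotate_index k_def using n_pos by simp
  moreover have "m mod n < N" using n_pos N_ge(2) mod_less_divisor[of n m] by linarith
  ultimately have "u m = (sigma d ^^ k) (u (m mod n))" using funpow_sigma_u by simp
  also have "u (m mod n) = T (idx m)" using u_T[OF idx_range[of m]] by (simp add: idx_def)
  also have "(sigma d ^^ k) (T (idx m)) = pt (orbit_num (digits_val (a (idx m))) k)"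
    unfolding T_def using below_den[OF idx_range] by (rule funpow_sigma_pt)
  also have "\<dots> = pt (U m)"
    using orbit_num_mod_period[of "digits_val (a (idx m))" k] by (simp add: U_def itr_eq k_def)
  finally show ?thesis .
qed

lemma U_increasing_if_rotational: U_increasing
  unfolding U_increasing_def
proof (intro allI impI)
  fix m assume "Suc m < N"
  then have "pt (U m) < pt (U (Suc m))"
    using u_strict_mono[of m "Suc m"] u_eq_pt_U_if_rotational by simp
  then show "U m < U (Suc m)" by simp
qed

end

lemma U_strict_mono_if_increasing:
  assumes U_increasing and "i < j" "j < N"
  shows "U i < U j"
  using u_strict_mono[OF assms(2,3)] u_eq_pt_U[OF assms(1)] assms(2,3) by simp

lemma n_pn_bounds: "n \<le> n * pn" "n * pn \<le> N - n"
proof -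
  show "n \<le> n * pn" using pn_pos by simp
  have "n * pn \<le> n * (q - 1)" using pn_less by (intro mult_le_mono2) simp
  then show "n * pn \<le> N - n" by (simp add: N_def diff_mult_distrib2)
qed

lemma lead_digit_orbit_num_U: "lead_digit (orbit_num (U m) j) = digit ((m + j * (n * pn)) mod N)"
  by (simp add: orbit_num_U lead_digit_U)

lemma rotate_index_Suc:
  assumes "(x + j * (n * pn)) mod N \<noteq> N - 1"
  shows "(Suc x + j * (n * pn)) mod N = Suc ((x + j * (n * pn)) mod N)"
proof -
  have "(x + j * (n * pn)) mod N < N" using N_ge(1) by simp
  then show ?thesis using assms by (simp add: mod_Suc)
qed

lemma rotate_index_wrap:
  assumes "r < N" "(r + n * pn) mod N = N - 1"
  shows "r = N - n * pn - 1"
proof (cases "r + n * pn < N")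
  case True
  then show ?thesis using assms by simp
next
  case False
  then have "(r + n * pn) mod N = r + n * pn - N"
    using assms(1) n_pn_bounds by (simp add: le_mod_geq)
  then show ?thesis using assms n_pn_bounds N_ge n_pos by linarith
qed

lemma digits_if_U_increasing:
  assumes inc: U_increasing
  shows "\<forall>m. Suc m < N \<longrightarrow> digit m \<le> digit (Suc m)"
    and "digit (N - n * pn - 1) < digit (N - n * pn)"
proof -
  show mono: "\<forall>m. Suc m < N \<longrightarrow> digit m \<le> digit (Suc m)"
    using inc lead_digit_mono lead_digit_U unfolding U_increasing_def by (metis less_imp_le)
  define M where "M = N - n * pn"
  have M: "1 \<le> M" "M < N" "Suc (M - 1) = M" "M - 1 + n * pn = N - 1" "M + n * pn = N"
    using n_pn_bounds n_pos N_ge by (auto simp: M_def)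
  have less: "U (M - 1) < U M" using inc M unfolding U_increasing_def by (metis less_imp_Suc_add add_Suc_right)
  have "digit (M - 1) \<noteq> digit M"
  proof
    assume "digit (M - 1) = digit M"
    then have "lead_digit (orbit_num (U (M - 1)) 0) = lead_digit (orbit_num (U M) 0)"
      by (simp add: orbit_num_0 U_less lead_digit_U)
    from orbit_num_Suc_less_if_lead_digit_eq(1)[OF this] have "orbit_num (U (M - 1)) 1 < orbit_num (U M) 1"
      using less by (simp add: orbit_num_0 U_less)
    then have "U (N - 1) < U 0" using M N_ge by (simp add: orbit_num_U)
    moreover have "U 0 < U (N - 1)" using U_strict_mono_if_increasing[OF inc] N_ge by simp
    ultimately show False by simp
  qed
  then show "digit (N - n * pn - 1) < digit (N - n * pn)"
    using mono M by (metis M_def le_neq_implies_less)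
qed

lemma U_increasing_if_digits:
  assumes mono: "\<forall>m. Suc m < N \<longrightarrow> digit m \<le> digit (Suc m)"
    and edge: "digit (N - n * pn - 1) < digit (N - n * pn)"
  shows U_increasing
  unfolding U_increasing_def
proof (intro allI impI)
  fix m assume m: "Suc m < N"
  define r where "r j = (m + j * (n * pn)) mod N" for j
  have r_less: "r j < N" for j using N_ge(1) by (simp add: r_def)
  have lead_m: "lead_digit (orbit_num (U m) j) = digit (r j)" for j
    by (simp add: lead_digit_orbit_num_U r_def)
  have lead_Suc_m: "lead_digit (orbit_num (U (Suc m)) j) = digit (Suc (r j))" if "r j \<noteq> N - 1" for j
    using that rotate_index_Suc[of m j] by (simp add: lead_digit_orbit_num_U r_def)
  have le: "lead_digit (orbit_num (U m) j) \<le> lead_digit (orbit_num (U (Suc m)) j)"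
    if "r j \<noteq> N - 1" for j
    using that mono r_less[of j] lead_m lead_Suc_m by simp
  show "U m < U (Suc m)"
  proof (cases "\<exists>j. r j = N - 1")
    case False
    have "U m \<noteq> U (Suc m)" using U_inj[of m "Suc m"] m by auto
    then show ?thesis using False le less_if_lead_digits_le U_less by blast
  next
    case True
    moreover have "r 0 \<noteq> N - 1" using m by (simp add: r_def)
    ultimately obtain J where before: "\<forall>j\<le>J. r j \<noteq> N - 1" and wrap: "r (Suc J) = N - 1"
      using ex_least_nat_less[of "\<lambda>j. r j = N - 1"] by blast
    have "m + Suc J * (n * pn) = (m + J * (n * pn)) + n * pn" by simp
    then have "r (Suc J) = (r J + n * pn) mod N"
      unfolding r_def by (simp only: mod_add_left_eq)
    then have "r J = N - n * pn - 1" using rotate_index_wrap r_less wrap by simp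
    moreover have "r J \<noteq> N - 1" using before by simp
    ultimately have "lead_digit (orbit_num (U m) J) < lead_digit (orbit_num (U (Suc m)) J)"
      using edge lead_m lead_Suc_m n_pn_bounds n_pos by (simp add: Suc_diff_Suc N_ge)
    moreover have "\<forall>j\<le>J. lead_digit (orbit_num (U m) j) \<le> lead_digit (orbit_num (U (Suc m)) j)"
      using le before by simp
    ultimately show ?thesis using less_if_lead_digits_lex U_less by blast
  qed
qed

lemma digit_eq: "digit m = a (m mod n + 1) (nat ((int (m div n) * ps) mod int q))"
  by (simp add: digit_def idx_def itr_def)

lemma digit_block: "r < n \<Longrightarrow> digit (r + n * y) = a (r + 1) (nat ((int y * ps) mod int q))"
  by (simp add: digit_eq)

lemma q_minus_pn_cong: "[int (q - pn) = - p] (mod int q)"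
proof -
  have "int (q - pn) = int q - p mod int q" using pn_less period by (simp add: pn_def of_nat_diff)
  also have "[\<dots> = 0 - p] (mod int q)" by (intro cong_diff) (simp_all add: cong_def)
  finally show ?thesis by simp
qed

lemma digit_edge_right: "digit (N - n * pn) = a 1 (nat ((- p * ps) mod int q))"
proof -
  have "N - n * pn = 0 + n * (q - pn)" by (simp add: N_def diff_mult_distrib2)
  then have "digit (N - n * pn) = a 1 (nat ((int (q - pn) * ps) mod int q))"
    using n_pos digit_block[of 0 "q - pn"] by simp
  also have "(int (q - pn) * ps) mod int q = (- p * ps) mod int q"
    using cong_mult[OF q_minus_pn_cong cong_refl[of ps]] unfolding cong_def .
  finally show ?thesis .
qed

lemma digit_edge_left: "digit (N - n * pn - 1) = a n (nat ((- (p + 1) * ps) mod int q))"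
proof -
  have "N - n * pn = n * (q - pn)" by (simp add: N_def diff_mult_distrib2)
  also have "\<dots> = n + n * (q - pn - 1)" using pn_less by (cases "q - pn") simp_all
  finally have "N - n * pn - 1 = (n - 1) + n * (q - pn - 1)" using n_pos by linarith
  then have "digit (N - n * pn - 1) = a n (nat ((int (q - pn - 1) * ps) mod int q))"
    using n_pos digit_block[of "n - 1" "q - pn - 1"] by simp
  also have "int (q - pn - 1) = int (q - pn) - 1" using pn_less by simp
  also have "((int (q - pn) - 1) * ps) mod int q = ((- p - 1) * ps) mod int q"
    using cong_mult[OF cong_diff[OF q_minus_pn_cong cong_refl[of 1]] cong_refl[of ps]]
    unfolding cong_def .
  finally show ?thesis by simp
qed

theorem rotational_iff_digits:
  assumes T_mono: "\<forall>i\<in>{1..n}. \<forall>j\<in>{1..n}. i < j \<longrightarrow> T i < T j"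
  shows "((\<forall>i\<in>{1..n}. \<forall>x\<in>orb d (T i). T i \<le> x) \<and> rot_shift d orbit_union (int n * p))
       \<longleftrightarrow>
         ((\<forall>m. m + 1 < n * q \<longrightarrow>
              a (m mod n + 1) (nat ((int (m div n) * ps) mod int q))
                \<le> a ((m + 1) mod n + 1) (nat ((int ((m + 1) div n) * ps) mod int q))) \<and>
          a n (nat ((- (p + 1) * ps) mod int q)) < a 1 (nat ((- p * ps) mod int q)))"
  unfolding digit_edge_left[symmetric] digit_edge_right[symmetric] digit_eq[symmetric] N_def[symmetric]
proof
  assume "(\<forall>i\<in>{1..n}. \<forall>x\<in>orb d (T i). T i \<le> x) \<and> rot_shift d orbit_union (int n * p)"
  then have U_increasing using U_increasing_if_rotational T_mono by blast
  from digits_if_U_increasing[OF this]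
  show "(\<forall>m. m + 1 < N \<longrightarrow> digit m \<le> digit (m + 1)) \<and> digit (N - n * pn - 1) < digit (N - n * pn)"
    by simp
next
  assume digits: "(\<forall>m. m + 1 < N \<longrightarrow> digit m \<le> digit (m + 1)) \<and> digit (N - n * pn - 1) < digit (N - n * pn)"
  have "\<forall>m. Suc m < N \<longrightarrow> digit m \<le> digit (Suc m)" using digits by simp
  then have U_increasing using U_increasing_if_digits digits by blast
  then show "(\<forall>i\<in>{1..n}. \<forall>x\<in>orb d (T i). T i \<le> x) \<and> rot_shift d orbit_union (int n * p)"
    using T_min_if_U_increasing rot_shift_if_U_increasing by blast
qed

end

theorem theorem3p1:
  fixes d q n :: nat and p ps :: int
    and t :: "nat \<Rightarrow> real" and a :: "nat \<Rightarrow> nat \<Rightarrow> nat"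
  assumes "d \<ge> 2" and "q \<ge> 2" and "n \<ge> 1"
    and "coprime p (int q)" and "[p * ps = 1] (mod int q)"
    and "\<forall>i\<in>{1..n}. 0 \<le> t i \<and> t i < 1"
    and "\<forall>i\<in>{1..n}. card (orb d (t i)) = q"
    and "\<forall>i\<in>{1..n}. \<forall>j\<in>{1..n}. i \<noteq> j \<longrightarrow> orb d (t i) \<noteq> orb d (t j)"
    and "\<forall>i\<in>{1..n}. \<forall>j\<in>{1..n}. i < j \<longrightarrow> t i < t j"
    and "\<forall>i\<in>{1..n}. (\<forall>k<q. a i k < d) \<and> t i = tuple_pt d q (a i)"
  shows "((\<forall>i\<in>{1..n}. \<forall>x\<in>orb d (t i). t i \<le> x) \<and>
           rot_shift d (\<Union>i\<in>{1..n}. orb d (t i)) (int n * p))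
       \<longleftrightarrow>
         ((\<forall>m. m + 1 < n * q \<longrightarrow>
              a (m mod n + 1) (nat ((int (m div n) * ps) mod int q))
                \<le> a ((m + 1) mod n + 1) (nat ((int ((m + 1) div n) * ps) mod int q))) \<and>
          a n (nat ((- (p + 1) * ps) mod int q)) < a 1 (nat ((- p * ps) mod int q)))"
proof -
  interpret period_expansion d q using assms(1,2) by unfold_locales
  have t: "t i = pt (digits_val (a i))" if "i \<in> {1..n}" for i
    using assms(10) that by (simp add: tuple_pt_eq_pt)
  have below: "digits_val (a i) < den" if "i \<in> {1..n}" for i
  proof -
    have "t i < 1" using assms(6) that by blast
    then show ?thesis using t[OF that] by (simp add: pt_less_1_iff)
  qed
  interpret orbit_family d q n p ps a
  proof unfold_locales
    show "inj_on (orbit_num (digits_val (a i))) {..<q}" if "i \<in> {1..n}" for i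
      using inj_on_orbit_num_if_card_orb below assms(7) t that by simp
    show "orbit_num (digits_val (a i)) s \<noteq> orbit_num (digits_val (a j)) s'"
      if "i \<in> {1..n}" "j \<in> {1..n}" "i \<noteq> j" for i j s s'
      using orbit_num_neq_if_orb_neq below assms(8) t that by simp
  qed (use assms below in auto)
  have T: "T i = t i" if "i \<in> {1..n}" for i using t that by (simp add: T_def)
  then have "\<forall>i\<in>{1..n}. \<forall>j\<in>{1..n}. i < j \<longrightarrow> T i < T j" using assms(9) by simp
  moreover have "(\<forall>i\<in>{1..n}. \<forall>x\<in>orb d (t i). t i \<le> x) \<longleftrightarrow> (\<forall>i\<in>{1..n}. \<forall>x\<in>orb d (T i). T i \<le> x)"
    using T by simp
  moreover have "(\<Union>i\<in>{1..n}. orb d (t i)) = orbit_union" using T by (simp add: orbit_union_def)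
  ultimately show ?thesis using rotational_iff_digits by presburger
qed

end
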